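(* Consider a general POVM attack on two-photon SARG04: Eve uses a POVM $\{M_{\mathrm{vac}},M_0,\dots,M_{J-1}\}$ on $\mathbb{C}^2\otimes\mathbb{C}^2$ (positive operators summing to $I$, $J$ arbitrary) and, on outcome $i$, sends Bob an arbitrary qubit state $|\sigma_i\rangle$ (on outcome vac she sends nothing). The resulting unnormalized state of Alice and Bob is $$\rho_{AB}=\sum_{k=0}^{3}\sum_{i=0}^{J-1}\operatorname{Tr}_{E}\!\Big[(I_A\otimes M_i)(I_A\otimes R^k\!\otimes\! R^k)|\Psi\rangle\langle\Psi|(I_A\otimes R^{-k}\!\otimes\! R^{-k})\Big]\otimes F R^{-k}|\sigma_i\rangle\langle\sigma_i|R^{k}F^\dagger,$$ with $|\Psi\rangle=|0_z\rangle_A|\varphi_0\varphi_0\rangle_E+|1_z\rangle_A|\varphi_1\varphi_1\rangle_E$, and the induced bit error rate (when $\operatorname{Tr}\rho_{AB}>0$) is $$e_b=\frac{\langle0_z1_z|\rho_{AB}|0_z1_z\rangle+\langle1_z0_z|\rho_{AB}|1_z0_z\rangle}{\operatorname{Tr}\rho_{AB}}.$$ Then the smallest bit error rate Eve can induce by such an attack is $\frac{3-\sqrt2}{7}\approx 22.65\%$. Moreover, this minimum is attained by the POVM with $J=4$, $$M_m=|\chi_m\rangle\langle\chi_m|,\quad |\chi_m\rangle=\lambda_+|\varphi_m\rangle|\varphi_m\rangle+\lambda_-|\varphi_{m+2}\rangle|\varphi_{m+2}\rangle,\quad m=0,\dots,3,$$ $$M_{\mathrm{vac}}=\tfrac12\big(|\varphi_0\varphi_2\rangle-|\varphi_2\varphi_0\rangle\big)\big(\langle\varphi_0\varphi_2|-\langle\varphi_2\varphi_0|\big)=\tfrac12\big(|\varphi_3\varphi_1\rangle-|\varphi_1\varphi_3\rangle\big)\big(\langle\varphi_3\varphi_1|-\langle\varphi_1\varphi_3|\big),$$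 where $\lambda_\pm=(\pm2+\sqrt2)/4$, with Eve sending $|\sigma_m\rangle=|\varphi_m\rangle$ on outcome $m$; the outcome vac never occurs since the states $|\varphi_m\rangle|\varphi_m\rangle$ are orthogonal to the support of $M_{\mathrm{vac}}$.
   Context: Qubits use bases related by $|0_x\rangle=(|0_z\rangle+|1_z\rangle)/\sqrt2$, $|1_x\rangle=(|0_z\rangle-|1_z\rangle)/\sqrt2$. Let $|\varphi_0\rangle=\cos(\pi/8)|0_x\rangle+\sin(\pi/8)|1_x\rangle$, $R=\cos(\pi/4)I+\sin(\pi/4)(|1_x\rangle\langle0_x|-|0_x\rangle\langle1_x|)$, $|\varphi_m\rangle=R^{-m}|\varphi_0\rangle$ with indices taken mod 4, and $F=\sin(\pi/8)|0_x\rangle\langle0_x|+\cos(\pi/8)|1_x\rangle\langle1_x|$ (Bob's successful filtering, i.e. conclusive result). Alice emits two identical photons and applies $R^k\otimes R^k$, $k\in\{0,1,2,3\}$ uniformly; Eve intercepts both; Bob applies $R^{-k}$ then $F$ to the qubit he receives. $\operatorname{Tr}_E$ is the partial trace over the two transmitted qubits. *)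

theory Defs
  imports Complex_Main
begin

text \<open>A qubit is indexed by bool (False = 0_z, True = 1_z); composite systems by
products of index types.\<close>

type_synonym 'i ket = "'i \<Rightarrow> complex"
type_synonym 'i op = "'i \<Rightarrow> 'i \<Rightarrow> complex"

definition idop :: "('i::finite) op" where
  "idop i j = (if i = j then 1 else 0)"

definition mmul :: "('i::finite) op \<Rightarrow> 'i op \<Rightarrow> 'i op" where
  "mmul A B i j = (\<Sum>k\<in>UNIV. A i k * B k j)"

definition app :: "('i::finite) op \<Rightarrow> 'i ket \<Rightarrow> 'i ket" where
  "app A v i = (\<Sum>j\<in>UNIV. A i j * v j)"

definition adj :: "('i::finite) op \<Rightarrow> 'i op" where
  "adj A i j = cnj (A j i)"

definition mpow :: "('i::finite) op \<Rightarrow> nat \<Rightarrow> 'i op" where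
  "mpow A n = (mmul A ^^ n) idop"

definition outer :: "('i::finite) ket \<Rightarrow> 'i ket \<Rightarrow> 'i op" where
  "outer u v i j = u i * cnj (v j)"

definition inner :: "('i::finite) ket \<Rightarrow> 'i ket \<Rightarrow> complex" where
  "inner u v = (\<Sum>i\<in>UNIV. cnj (u i) * v i)"

definition trace :: "('i::finite) op \<Rightarrow> complex" where
  "trace A = (\<Sum>i\<in>UNIV. A i i)"

definition tket :: "('i::finite) ket \<Rightarrow> ('j::finite) ket \<Rightarrow> ('i \<times> 'j) ket" where
  "tket u v = (\<lambda>(i, j). u i * v j)"

definition topr :: "('i::finite) op \<Rightarrow> ('j::finite) op \<Rightarrow> ('i \<times> 'j) op" where
  "topr A B = (\<lambda>(i, j) (k, l). A i k * B j l)"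

definition ptrace2 :: "(('i::finite) \<times> ('j::finite)) op \<Rightarrow> 'i op" where
  "ptrace2 X a a' = (\<Sum>e\<in>UNIV. X (a, e) (a', e))"

definition positive_op :: "('i::finite) op \<Rightarrow> bool" where
  "positive_op A \<longleftrightarrow> (\<forall>v. Im (inner v (app A v)) = 0 \<and> Re (inner v (app A v)) \<ge> 0)"

definition ket0z :: "bool ket" where "ket0z b = (if b then 0 else 1)"
definition ket1z :: "bool ket" where "ket1z b = (if b then 1 else 0)"

definition ket0x :: "bool ket" where
  "ket0x b = (ket0z b + ket1z b) / complex_of_real (sqrt 2)"
definition ket1x :: "bool ket" where
  "ket1x b = (ket0z b - ket1z b) / complex_of_real (sqrt 2)"

definition phi0 :: "bool ket" where
  "phi0 b = complex_of_real (cos (pi/8)) * ket0x b + complex_of_real (sin (pi/8)) * ket1x b"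

definition Rop :: "bool op" where
  "Rop i j = complex_of_real (cos (pi/4)) * idop i j
           + complex_of_real (sin (pi/4)) * (outer ket1x ket0x i j - outer ket0x ket1x i j)"

text \<open>R is a real rotation (orthogonal), so its inverse is its adjoint;
R^(-k) is written as (R^(-1))^k = (adj R)^k.\<close>
definition Rinv :: "bool op" where "Rinv = adj Rop"

definition phi :: "nat \<Rightarrow> bool ket" where
  "phi m = app (mpow Rinv (m mod 4)) phi0"

definition Fop :: "bool op" where
  "Fop i j = complex_of_real (sin (pi/8)) * outer ket0x ket0x i j
           + complex_of_real (cos (pi/8)) * outer ket1x ket1x i j"

definition Psi :: "(bool \<times> bool \<times> bool) ket" where
  "Psi = (\<lambda>x. tket ket0z (tket phi0 phi0) x + tket ket1z (tket (phi 1) (phi 1)) x)"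

definition rhoAB :: "nat \<Rightarrow> (nat \<Rightarrow> (bool \<times> bool) op) \<Rightarrow> (nat \<Rightarrow> bool ket) \<Rightarrow> (bool \<times> bool) op" where
  "rhoAB J M sigma = (\<lambda>x y. \<Sum>k<4. \<Sum>i<J.
      topr
        (ptrace2 (mmul (topr idop (M i))
                 (mmul (topr idop (topr (mpow Rop k) (mpow Rop k)))
                 (mmul (outer Psi Psi)
                       (topr idop (topr (mpow Rinv k) (mpow Rinv k)))))))
        (mmul Fop (mmul (mpow Rinv k) (mmul (outer (sigma i) (sigma i))
                 (mmul (mpow Rop k) (adj Fop)))))
      x y)"

text \<open>Bit error rate (<0_z 1_z|rho|0_z 1_z> + <1_z 0_z|rho|1_z 0_z>) / Tr rho.
These quantities are real for a positive rho; we take real parts.\<close>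
definition ebit :: "(bool \<times> bool) op \<Rightarrow> real" where
  "ebit \<rho> = Re (\<rho> (False, True) (False, True) + \<rho> (True, False) (True, False)) / Re (trace \<rho>)"

definition valid_attack :: "nat \<Rightarrow> (bool \<times> bool) op \<Rightarrow> (nat \<Rightarrow> (bool \<times> bool) op) \<Rightarrow> (nat \<Rightarrow> bool ket) \<Rightarrow> bool" where
  "valid_attack J Mvac M sigma \<longleftrightarrow>
     positive_op Mvac \<and> (\<forall>i<J. positive_op (M i)) \<and>
     (\<forall>x y. Mvac x y + (\<Sum>i<J. M i x y) = idop x y) \<and>
     (\<forall>i<J. inner (sigma i) (sigma i) = 1)"

definition lam_plus :: real where "lam_plus = (2 + sqrt 2) / 4"
definition lam_minus :: real where "lam_minus = (-2 + sqrt 2) / 4"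

definition chi :: "nat \<Rightarrow> (bool \<times> bool) ket" where
  "chi m = (\<lambda>x. complex_of_real lam_plus * tket (phi m) (phi m) x
              + complex_of_real lam_minus * tket (phi (m + 2)) (phi (m + 2)) x)"

definition Mopt :: "nat \<Rightarrow> (bool \<times> bool) op" where
  "Mopt m = outer (chi m) (chi m)"

definition Mvac_opt :: "(bool \<times> bool) op" where
  "Mvac_opt = (\<lambda>x y. outer (\<lambda>z. tket (phi 0) (phi 2) z - tket (phi 2) (phi 0) z)
                           (\<lambda>z. tket (phi 0) (phi 2) z - tket (phi 2) (phi 0) z) x y / 2)"

end

theory Submission
  imports Defs
begin

(*
  For one outcome of Eve's POVM, with element M and resent qubit v, both the error weight N
  (Bob's wrong conclusive results) and the sifted weight D (all conclusive results) are linear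
  in M: they are combinations of the expectations of M in the eight two-photon signal states
  R^k phi_a (x) R^k phi_a, with coefficients that are quadratic in v.  Bob's filter F R^(-k) is a
  real matrix, so the real and imaginary parts of v contribute separately, and for real v the
  operator behind N - e D, with e = (3 - sqrt 2)/7, is an explicit positive multiple of
  |V1><V1| + |V2><V2| for two vectors V1, V2 linear in v.  Hence N >= e D whenever M >= 0, and
  summing over the outcomes gives e_b >= e.
*)

lemma sum_UNIV_bool: "sum f (UNIV :: bool set) = f False + f True"
  by (simp add: UNIV_bool add.commute)

lemma sum_UNIV_prod: "sum f UNIV = (\<Sum>a\<in>UNIV. \<Sum>b\<in>UNIV. f (a, b))"
  by (simp add: sum.cartesian_product)

lemma sum_UNIV_bool_bool:
  "sum f (UNIV :: (bool \<times> bool) set) = f (False, False) + f (False, True) + f (True, False) + f (True, True)"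
  by (simp add: sum_UNIV_prod sum_UNIV_bool add.assoc)

lemma sum_lessThan_4: "(\<Sum>k<4. f k) = f 0 + f 1 + f 2 + f (3 :: nat)"
  by (simp add: eval_nat_numeral)

lemma idop_mult: "idop i j * x = (if i = j then x else 0)"
  and mult_idop: "x * idop i j = (if i = j then x else 0)"
  by (simp_all add: idop_def)

lemma app_idop [simp]: "app idop v = v"
  by (auto simp: app_def idop_mult mult_idop intro!: ext)

lemma mmul_idop_left [simp]: "mmul idop A = A"
  by (auto simp: mmul_def idop_mult mult_idop intro!: ext)

lemma mmul_idop_right [simp]: "mmul A idop = A"
  by (auto simp: mmul_def idop_mult mult_idop intro!: ext)

lemma app_mmul: "app (mmul A B) v = app A (app B v)"
  unfolding app_def mmul_def
  by (intro ext) (simp add: sum_distrib_left sum_distrib_right mult.assoc, rule sum.swap)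

lemma mmul_assoc: "mmul (mmul A B) C = mmul A (mmul B C)"
  unfolding mmul_def
  by (intro ext) (simp add: sum_distrib_left sum_distrib_right mult.assoc, rule sum.swap)

lemma app_lambda_add: "app A (\<lambda>x. u x + v x) = (\<lambda>i. app A u i + app A v i)"
  by (auto simp: app_def distrib_left sum.distrib intro!: ext)

lemma adj_adj [simp]: "adj (adj A) = A"
  by (simp add: adj_def fun_eq_iff)

lemma adj_idop [simp]: "adj idop = idop"
  by (auto simp: adj_def idop_def intro!: ext)

lemma adj_mmul: "adj (mmul A B) = mmul (adj B) (adj A)"
  by (auto simp: adj_def mmul_def mult.commute intro!: ext)

lemma mpow_0 [simp]: "mpow A 0 = idop"
  by (simp add: mpow_def)

lemma mpow_Suc: "mpow A (Suc n) = mmul A (mpow A n)"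
  by (simp add: mpow_def)

lemma mpow_Suc_0 [simp]: "mpow A (Suc 0) = A"
  by (simp add: mpow_def)

lemma mpow_Suc_right: "mpow A (Suc n) = mmul (mpow A n) A"
  by (induction n) (simp_all add: mpow_Suc flip: mmul_assoc)

lemma adj_mpow: "adj (mpow A n) = mpow (adj A) n"
  by (induction n) (simp_all add: mpow_Suc adj_mmul flip: mpow_Suc_right)

lemma app_outer: "app (outer u v) w = (\<lambda>i. u i * inner v w)"
  by (auto simp: app_def outer_def inner_def sum_distrib_left mult.assoc intro!: ext)

lemma mmul_outer_left: "mmul A (outer u v) = outer (app A u) v"
  by (auto simp: mmul_def outer_def app_def sum_distrib_right mult.assoc intro!: ext)

lemma mmul_outer_right: "mmul (outer u v) B = outer u (app (adj B) v)"
  by (auto simp: mmul_def outer_def app_def adj_def sum_distrib_left mult_ac intro!: ext)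

lemma topr_apply: "topr A B (i, j) (k, l) = A i k * B j l"
  by (simp add: topr_def)

lemma adj_topr: "adj (topr A B) = topr (adj A) (adj B)"
  by (auto simp: adj_def topr_def intro!: ext)

lemma app_topr_tket: "app (topr A B) (tket u v) = tket (app A u) (app B v)"
  by (auto simp: app_def topr_def tket_def sum_UNIV_prod sum_product mult_ac intro!: ext)

lemma ptrace2_diag_outer:
  "ptrace2 (mmul (topr idop M) (outer x x)) a a = inner (\<lambda>e. x (a, e)) (app M (\<lambda>e. x (a, e)))"
proof -
  have "app (topr idop M) x (a, e) = app M (\<lambda>e. x (a, e)) e" for e
    by (simp add: app_def topr_def sum_UNIV_prod mult.assoc flip: sum_distrib_left) (simp add: idop_mult)
  then show ?thesis
    by (simp add: mmul_outer_left ptrace2_def outer_def inner_def mult.commute)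
qed

lemma app_outer_divide: "app (\<lambda>x y. outer u v x y / c) w = (\<lambda>i. u i * inner v w / c)"
  by (auto simp: app_def outer_def inner_def sum_divide_distrib sum_distrib_left mult_ac intro!: ext)

definition quad_form :: "('i::finite) op \<Rightarrow> 'i ket \<Rightarrow> complex" where
  "quad_form M v = inner v (app M v)"

lemma quad_form_expand: "quad_form M v = (\<Sum>e\<in>UNIV. \<Sum>f\<in>UNIV. cnj (v e) * M e f * v f)"
  by (simp add: quad_form_def inner_def app_def sum_distrib_left mult.assoc)

lemma sum_quad_form:
  assumes "finite J"
  shows "(\<Sum>j\<in>J. g j * quad_form M (z j))
       = (\<Sum>e\<in>UNIV. \<Sum>f\<in>UNIV. M e f * (\<Sum>j\<in>J. g j * cnj (z j e) * z j f))"
  unfolding quad_form_expand sum_distrib_left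
  by (subst sum.swap, subst (2) sum.swap) (simp add: mult_ac)

lemma quad_form_outer: "quad_form (outer u u) w = cnj (inner u w) * inner u w"
  by (simp add: quad_form_def app_outer inner_def sum_distrib_right mult_ac)

lemma Re_quad_form_nonneg: "positive_op M \<Longrightarrow> Re (quad_form M v) \<ge> 0"
  by (simp add: positive_op_def quad_form_def)

lemma positive_op_outer: "positive_op (outer u u)"
  by (simp add: positive_op_def flip: quad_form_def add: quad_form_outer)

lemma positive_op_divide:
  assumes "positive_op A" and "r \<ge> 0"
  shows "positive_op (\<lambda>x y. A x y / of_real r)"
proof -
  have "inner v (app (\<lambda>x y. A x y / of_real r) v) = inner v (app A v) / of_real r" for v
    by (simp add: inner_def app_def sum_divide_distrib flip: times_divide_eq_right)
  then show ?thesis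
    using assms by (simp add: positive_op_def)
qed

lemma quad_form_pair_expand:
  "(\<Sum>e\<in>UNIV. \<Sum>f\<in>UNIV. M e f * (c * (cnj (y e) * y f + cnj (z e) * z f)))
   = c * (quad_form M y + quad_form M z)"
  by (simp add: quad_form_expand sum_distrib_left sum.distrib algebra_simps)

definition re_ket :: "'i ket \<Rightarrow> 'i ket" where
  "re_ket v = (\<lambda>i. complex_of_real (Re (v i)))"

definition im_ket :: "'i ket \<Rightarrow> 'i ket" where
  "im_ket v = (\<lambda>i. complex_of_real (Im (v i)))"

lemma app_mult_cnj_real_op:
  assumes "\<And>i j. A i j \<in> \<real>"
  shows "app A v i * cnj (app A v i) = (app A (re_ket v) i)\<^sup>2 + (app A (im_ket v) i)\<^sup>2"
proof -
  define a b where "a = app A (re_ket v) i" and "b = app A (im_ket v) i"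
  have "a \<in> \<real>" "b \<in> \<real>"
    using assms by (auto simp: a_def b_def app_def re_ket_def im_ket_def)
  then have real: "cnj a = a" "cnj b = b"
    by (simp_all add: Reals_cnj_iff)
  have "app A v i = a + \<i> * b"
    unfolding a_def b_def app_def re_ket_def im_ket_def sum_distrib_left sum.distrib[symmetric]
    by (subst complex_eq) (simp add: algebra_simps)
  then show ?thesis
    unfolding a_def[symmetric] b_def[symmetric]
    using real by (simp add: power2_eq_square algebra_simps)
qed

lemma mmul_in_Reals: "(\<And>i j. A i j \<in> \<real>) \<Longrightarrow> (\<And>i j. B i j \<in> \<real>) \<Longrightarrow> mmul A B i j \<in> \<real>"
  by (simp add: mmul_def)

lemma mpow_in_Reals: "(\<And>i j. A i j \<in> \<real>) \<Longrightarrow> mpow A n i j \<in> \<real>"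
  by (induction n arbitrary: i j) (simp_all add: mpow_Suc idop_def mmul_in_Reals)

section \<open>The error and sifted weights of one POVM outcome\<close>

definition signal :: "nat \<Rightarrow> bool \<Rightarrow> bool ket" where
  "signal k a = app (mpow Rop k) (if a then phi 1 else phi0)"

definition signal_pair :: "nat \<Rightarrow> bool \<Rightarrow> (bool \<times> bool) ket" where
  "signal_pair k a = tket (signal k a) (signal k a)"

definition filtered :: "nat \<Rightarrow> bool ket \<Rightarrow> bool ket" where
  "filtered k v = app Fop (app (mpow Rinv k) v)"

lemma adj_mpow_Rinv: "adj (mpow Rinv k) = mpow Rop k"
  and adj_mpow_Rop: "adj (mpow Rop k) = mpow Rinv k"
  by (simp_all add: adj_mpow Rinv_def)

lemma ptrace2_rotated_Psi:
  "ptrace2 (mmul (topr idop M)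
             (mmul (topr idop (topr (mpow Rop k) (mpow Rop k)))
             (mmul (outer Psi Psi) (topr idop (topr (mpow Rinv k) (mpow Rinv k)))))) a a
   = quad_form M (signal_pair k a)"
proof -
  define x where "x = app (topr idop (topr (mpow Rop k) (mpow Rop k))) Psi"
  have "mmul (topr idop (topr (mpow Rop k) (mpow Rop k)))
          (mmul (outer Psi Psi) (topr idop (topr (mpow Rinv k) (mpow Rinv k)))) = outer x x"
    by (simp add: mmul_outer_right mmul_outer_left adj_topr adj_mpow_Rinv x_def)
  moreover have "(\<lambda>e. x (a, e)) = signal_pair k a"
    unfolding x_def Psi_def app_lambda_add app_topr_tket app_idop
    by (cases a) (auto simp: signal_pair_def signal_def tket_def ket0z_def ket1z_def)
  ultimately show ?thesis
    by (simp add: ptrace2_diag_outer quad_form_def)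
qed

lemma bob_filtered_outer:
  "mmul Fop (mmul (mpow Rinv k) (mmul (outer v v) (mmul (mpow Rop k) (adj Fop))))
   = outer (filtered k v) (filtered k v)"
  by (simp add: mmul_outer_right mmul_outer_left adj_mmul adj_mpow_Rop app_mmul filtered_def)

lemma rhoAB_diag:
  "rhoAB J M sigma (a, b) (a, b)
   = (\<Sum>k<4. \<Sum>i<J. quad_form (M i) (signal_pair k a)
                     * (filtered k (sigma i) b * cnj (filtered k (sigma i) b)))"
  by (simp only: rhoAB_def topr_apply ptrace2_rotated_Psi bob_filtered_outer outer_def)

definition error_weight :: "(bool \<times> bool) op \<Rightarrow> bool ket \<Rightarrow> complex" where
  "error_weight M v = (\<Sum>k<4. \<Sum>a\<in>UNIV.
     quad_form M (signal_pair k a) * (filtered k v (\<not> a) * cnj (filtered k v (\<not> a))))"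

definition sift_weight :: "(bool \<times> bool) op \<Rightarrow> bool ket \<Rightarrow> complex" where
  "sift_weight M v = (\<Sum>k<4. \<Sum>a\<in>UNIV.
     quad_form M (signal_pair k a) * (\<Sum>b\<in>UNIV. filtered k v b * cnj (filtered k v b)))"

lemma rhoAB_error_entries:
  "rhoAB J M sigma (False, True) (False, True) + rhoAB J M sigma (True, False) (True, False)
   = (\<Sum>i<J. error_weight (M i) (sigma i))"
  by (simp add: rhoAB_diag error_weight_def sum_UNIV_bool sum.distrib[symmetric]
      sum.swap[of _ "{..<4}"])

lemma trace_rhoAB: "trace (rhoAB J M sigma) = (\<Sum>i<J. sift_weight (M i) (sigma i))"
  by (simp add: trace_def sum_UNIV_prod sum_UNIV_bool rhoAB_diag sift_weight_def distrib_left
      sum.distrib[symmetric] sum.swap[of _ "{..<4}"] add_ac)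

lemma ebit_rhoAB_ge:
  assumes "\<And>i. i < J \<Longrightarrow> Re (error_weight (M i) (sigma i)) \<ge> c * Re (sift_weight (M i) (sigma i))"
    and "Re (trace (rhoAB J M sigma)) > 0"
  shows "ebit (rhoAB J M sigma) \<ge> c"
proof -
  have "c * Re (trace (rhoAB J M sigma)) = (\<Sum>i<J. c * Re (sift_weight (M i) (sigma i)))"
    by (simp add: trace_rhoAB sum_distrib_left)
  also have "\<dots> \<le> (\<Sum>i<J. Re (error_weight (M i) (sigma i)))"
    using assms(1) by (intro sum_mono) simp
  also have "\<dots> = Re (rhoAB J M sigma (False, True) (False, True)
                     + rhoAB J M sigma (True, False) (True, False))"
    by (simp add: rhoAB_error_entries)
  finally show ?thesis
    using assms(2) by (simp add: ebit_def pos_le_divide_eq)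
qed

lemma cos_pi8_sq: "cos (pi / 8) ^ 2 = (2 + sqrt 2) / 4"
proof -
  have "cos (pi / 4) = 2 * cos (pi / 8) ^ 2 - 1"
    using cos_double_cos[of "pi / 8"] by simp
  then show ?thesis
    by (simp add: cos_45)
qed

lemma sin_pi8_sq: "sin (pi / 8) ^ 2 = (2 - sqrt 2) / 4"
  by (simp add: sin_squared_eq cos_pi8_sq field_simps)

lemma sin_cos_pi8: "sin (pi / 8) * cos (pi / 8) = sqrt 2 / 4"
proof -
  have "2 * (sin (pi / 8) * cos (pi / 8)) = sqrt 2 / 2"
    using sin_double[of "pi / 8"] by (simp add: sin_45 mult.assoc)
  then show ?thesis
    by simp
qed

lemma sin_pi8_eq: "sin (pi / 8) = (sqrt 2 - 1) * cos (pi / 8)"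
proof -
  have "cos (pi / 8) > 0"
    by (rule cos_gt_zero) (use pi_gt_zero in auto)
  moreover have "(sqrt 2 - 1) * cos (pi / 8) * cos (pi / 8) = sin (pi / 8) * cos (pi / 8)"
  proof -
    have "(sqrt 2 - 1) * cos (pi / 8) * cos (pi / 8) = (sqrt 2 - 1) * cos (pi / 8) ^ 2"
      by (simp add: power2_eq_square)
    also have "\<dots> = sqrt 2 / 4"
      by (simp add: cos_pi8_sq field_simps)
    finally show ?thesis
      by (simp add: sin_cos_pi8)
  qed
  ultimately show ?thesis
    by simp
qed

abbreviation c8 :: complex where "c8 \<equiv> complex_of_real (cos (pi / 8))"
abbreviation s8 :: complex where "s8 \<equiv> complex_of_real (sin (pi / 8))"
abbreviation r2 :: complex where "r2 \<equiv> complex_of_real (sqrt 2)"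

lemma pi8_identities:
  "c8 * c8 = (2 + r2) / 4" "s8 * s8 = (2 - r2) / 4" "s8 * c8 = r2 / 4" "r2 * r2 = 2"
  "r2 * c8 = c8 + s8" "r2 * s8 = c8 - s8"
proof -
  have c: "cos (pi / 8) * cos (pi / 8) = (2 + sqrt 2) / 4"
    using cos_pi8_sq by (simp add: power2_eq_square)
  have s: "sin (pi / 8) * sin (pi / 8) = (2 - sqrt 2) / 4"
    using sin_pi8_sq by (simp add: power2_eq_square)
  have rc: "sqrt 2 * cos (pi / 8) = cos (pi / 8) + sin (pi / 8)"
    by (simp add: sin_pi8_eq algebra_simps)
  have rs: "sqrt 2 * sin (pi / 8) = cos (pi / 8) - sin (pi / 8)"
    by (simp add: sin_pi8_eq algebra_simps)
  show "c8 * c8 = (2 + r2) / 4" "s8 * s8 = (2 - r2) / 4" "s8 * c8 = r2 / 4" "r2 * r2 = 2"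
    "r2 * c8 = c8 + s8" "r2 * s8 = c8 - s8"
    by (simp_all only: of_real_mult[symmetric] c s sin_cos_pi8 rc rs) simp_all
qed

(* The same identities in every position of a right-nested product, as produced by field_simps. *)
lemma pi8_simps:
  "c8 * c8 = (2 + r2) / 4" "s8 * s8 = (2 - r2) / 4" "s8 * c8 = r2 / 4" "c8 * s8 = r2 / 4"
  "r2 * r2 = 2" "r2 * c8 = c8 + s8" "r2 * s8 = c8 - s8" "c8 * r2 = c8 + s8" "s8 * r2 = c8 - s8"
  "c8 * (c8 * x) = (2 + r2) / 4 * x" "s8 * (s8 * x) = (2 - r2) / 4 * x"
  "s8 * (c8 * x) = r2 / 4 * x" "c8 * (s8 * x) = r2 / 4 * x" "r2 * (r2 * x) = 2 * x"
  "r2 * (c8 * x) = (c8 + s8) * x" "r2 * (s8 * x) = (c8 - s8) * x"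
  "c8 * (r2 * x) = (c8 + s8) * x" "s8 * (r2 * x) = (c8 - s8) * x"
  by (simp_all add: pi8_identities mult.assoc[symmetric] mult.commute[of c8 s8]
      mult.commute[of c8 r2] mult.commute[of s8 r2])

definition vec2 :: "complex \<Rightarrow> complex \<Rightarrow> bool ket" where
  "vec2 a b = (\<lambda>i. if i then b else a)"

definition mat2 :: "complex \<Rightarrow> complex \<Rightarrow> complex \<Rightarrow> complex \<Rightarrow> bool op" where
  "mat2 a b c d = (\<lambda>i j. if i then (if j then d else c) else (if j then b else a))"

lemma vec2_apply [simp]: "vec2 a b False = a" "vec2 a b True = b"
  by (simp_all add: vec2_def)

lemma mat2_apply [simp]:
  "mat2 a b c d False False = a" "mat2 a b c d False True = b"
  "mat2 a b c d True False = c" "mat2 a b c d True True = d"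
  by (simp_all add: mat2_def)

lemma mat2_in_Reals: "a \<in> \<real> \<Longrightarrow> b \<in> \<real> \<Longrightarrow> c \<in> \<real> \<Longrightarrow> d \<in> \<real> \<Longrightarrow> mat2 a b c d i j \<in> \<real>"
  by (simp add: mat2_def)

lemma app_mat2: "app (mat2 a b c d) v = vec2 (a * v False + b * v True) (c * v False + d * v True)"
  by (auto simp: app_def sum_UNIV_bool vec2_def mat2_def intro!: ext)

lemma app_mat2_vec2 [simp]: "app (mat2 a b c d) (vec2 x y) = vec2 (a * x + b * y) (c * x + d * y)"
  by (simp add: app_mat2)

lemma mmul_mat2 [simp]:
  "mmul (mat2 a b c d) (mat2 a' b' c' d')
   = mat2 (a * a' + b * c') (a * b' + b * d') (c * a' + d * c') (c * b' + d * d')"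
  by (auto simp: mmul_def sum_UNIV_bool mat2_def intro!: ext)

lemma adj_mat2 [simp]: "adj (mat2 a b c d) = mat2 (cnj a) (cnj c) (cnj b) (cnj d)"
  by (auto simp: adj_def mat2_def intro!: ext)

lemma outer_vec2: "outer (vec2 a b) (vec2 c d) = mat2 (a * cnj c) (a * cnj d) (b * cnj c) (b * cnj d)"
  by (auto simp: outer_def vec2_def mat2_def intro!: ext)

lemma idop_mat2: "idop = mat2 1 0 0 1"
  by (auto simp: idop_def mat2_def intro!: ext)

lemma ket0x_vec2: "ket0x = vec2 (1 / r2) (1 / r2)"
  and ket1x_vec2: "ket1x = vec2 (1 / r2) (- 1 / r2)"
  by (auto simp: ket0x_def ket1x_def ket0z_def ket1z_def vec2_def intro!: ext)

lemma phi0_vec2: "phi0 = vec2 c8 s8"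
  unfolding phi0_def ket0x_vec2 ket1x_vec2
  by (auto simp: vec2_def field_simps pi8_simps intro!: ext)

lemma Rop_mat2: "Rop = mat2 (r2 / 2) (r2 / 2) (- r2 / 2) (r2 / 2)"
  unfolding Rop_def ket0x_vec2 ket1x_vec2 outer_vec2 idop_mat2
  by (auto simp: mat2_def cos_45 sin_45 field_simps pi8_simps intro!: ext)

lemma Rinv_mat2: "Rinv = mat2 (r2 / 2) (- r2 / 2) (r2 / 2) (r2 / 2)"
  by (simp add: Rinv_def Rop_mat2)

lemma Fop_mat2: "Fop = mat2 ((s8 + c8) / 2) ((s8 - c8) / 2) ((s8 - c8) / 2) ((s8 + c8) / 2)"
  unfolding Fop_def ket0x_vec2 ket1x_vec2 outer_vec2
  by (auto simp: mat2_def field_simps pi8_simps intro!: ext)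


lemma mpow_Rop_mat2:
  "mpow Rop 2 = mat2 0 1 (- 1) 0"
  "mpow Rop 3 = mat2 (- r2 / 2) (r2 / 2) (- r2 / 2) (- r2 / 2)"
  by (simp_all add: mpow_def eval_nat_numeral Rop_mat2 field_simps pi8_simps)

lemma mpow_Rinv_mat2:
  "mpow Rinv 2 = mat2 0 (- 1) 1 0"
  "mpow Rinv 3 = mat2 (- r2 / 2) (- r2 / 2) (r2 / 2) (- r2 / 2)"
  by (simp_all add: mpow_def eval_nat_numeral Rinv_mat2 field_simps pi8_simps)

lemma phi_vec2:
  "phi 0 = vec2 c8 s8" "phi 1 = vec2 s8 c8" "phi 2 = vec2 (- s8) c8" "phi 3 = vec2 (- c8) s8"
  "phi 4 = vec2 c8 s8" "phi 5 = vec2 s8 c8"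
  by (simp_all add: phi_def mpow_Rinv_mat2)
    (simp_all add: phi0_vec2 Rinv_mat2 field_simps pi8_simps)

lemma signal_vec2:
  "signal 0 a = (if a then vec2 s8 c8 else vec2 c8 s8)"
  "signal 1 a = (if a then vec2 c8 s8 else vec2 c8 (- s8))"
  "signal 2 a = (if a then vec2 c8 (- s8) else vec2 s8 (- c8))"
  "signal 3 a = (if a then vec2 s8 (- c8) else vec2 (- s8) (- c8))"
  unfolding signal_def phi_vec2 phi0_vec2
  by (simp_all add: mpow_Rop_mat2) (simp_all add: Rop_mat2 field_simps pi8_simps)

lemma filtered_mat2:
  "filtered 0 v = app (mat2 ((c8 + s8) / 2) ((s8 - c8) / 2) ((s8 - c8) / 2) ((c8 + s8) / 2)) v"
  "filtered 1 v = app (mat2 ((c8 - s8) / 2) ((- c8 - s8) / 2) ((c8 - s8) / 2) ((c8 + s8) / 2)) v"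
  "filtered 2 v = app (mat2 ((s8 - c8) / 2) ((- c8 - s8) / 2) ((c8 + s8) / 2) ((c8 - s8) / 2)) v"
  "filtered 3 v = app (mat2 ((- c8 - s8) / 2) ((s8 - c8) / 2) ((c8 + s8) / 2) ((s8 - c8) / 2)) v"
  by (simp_all add: filtered_def mpow_Rinv_mat2 flip: app_mmul)
    (simp_all add: Fop_mat2 Rinv_mat2 field_simps pi8_simps)

definition vec4 :: "complex \<Rightarrow> complex \<Rightarrow> complex \<Rightarrow> complex \<Rightarrow> (bool \<times> bool) ket" where
  "vec4 a b c d = (\<lambda>(i, j). if i then (if j then d else c) else (if j then b else a))"

lemma vec4_apply [simp]:
  "vec4 a b c d (False, False) = a" "vec4 a b c d (False, True) = b"
  "vec4 a b c d (True, False) = c" "vec4 a b c d (True, True) = d"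
  by (simp_all add: vec4_def)

lemma tket_vec2: "tket (vec2 a b) (vec2 c d) = vec4 (a * c) (a * d) (b * c) (b * d)"
  by (auto simp: tket_def vec2_def vec4_def intro!: ext)

lemma inner_vec4:
  "inner (vec4 a b c d) (vec4 a' b' c' d') = cnj a * a' + cnj b * b' + cnj c * c' + cnj d * d'"
  by (simp add: inner_def sum_UNIV_bool_bool)

lemma re_ket_vec2: "re_ket v = vec2 (of_real (Re (v False))) (of_real (Re (v True)))"
  and im_ket_vec2: "im_ket v = vec2 (of_real (Im (v False))) (of_real (Im (v True)))"
  by (auto simp: re_ket_def im_ket_def vec2_def intro!: ext)

section \<open>The sum-of-squares certificate\<close>

lemma filtered_mult_cnj:
  "filtered k v b * cnj (filtered k v b) = (filtered k (re_ket v) b)\<^sup>2 + (filtered k (im_ket v) b)\<^sup>2"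
proof -
  have "mmul Fop (mpow Rinv k) i j \<in> \<real>" for i j
    by (intro mmul_in_Reals mpow_in_Reals) (simp_all add: Fop_mat2 Rinv_mat2 mat2_in_Reals)
  then show ?thesis
    unfolding filtered_def app_mmul[symmetric] by (rule app_mult_cnj_real_op)
qed

abbreviation ebit_min :: real where "ebit_min \<equiv> (3 - sqrt 2) / 7"

definition error_coeff :: "nat \<Rightarrow> bool \<Rightarrow> bool ket \<Rightarrow> complex" where
  "error_coeff k a v = (filtered k v (\<not> a))\<^sup>2
     - of_real ebit_min * ((filtered k v False)\<^sup>2 + (filtered k v True)\<^sup>2)"

definition sos_vec1 :: "bool ket \<Rightarrow> (bool \<times> bool) ket" where
  "sos_vec1 v = vec4 ((3 - 2 * r2) * v False) ((1 - r2) * v True) ((1 - r2) * v True) (v False)"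

definition sos_vec2 :: "bool ket \<Rightarrow> (bool \<times> bool) ket" where
  "sos_vec2 v = vec4 (v True) ((1 - r2) * v False) ((1 - r2) * v False) ((3 - 2 * r2) * v True)"

(* Both sides are quadratic in w, and the identity fails for complex w; hence complex resent
   states are first split by re_ket and im_ket. *)
lemma sos_certificate:
  fixes x0 x1 :: real
  defines "w \<equiv> vec2 (of_real x0) (of_real x1)"
  shows "(\<Sum>k<4. \<Sum>a\<in>UNIV. error_coeff k a w * cnj (signal_pair k a e) * signal_pair k a f)
       = of_real ((11 + 8 * sqrt 2) / 28)
         * (cnj (sos_vec1 w e) * sos_vec1 w f + cnj (sos_vec2 w e) * sos_vec2 w f)"
proof -
  obtain e1 e2 f1 f2 where ef: "e = (e1, e2)" "f = (f1, f2)"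
    by fastforce
  show ?thesis
    unfolding sum_lessThan_4 sum_UNIV_bool error_coeff_def signal_pair_def sos_vec1_def sos_vec2_def
      w_def ef
    by (simp only: signal_vec2 filtered_mat2 if_True if_False not_True_eq_False
        not_False_eq_True app_mat2_vec2 vec2_apply tket_vec2)
      (cases e1; cases e2; cases f1; cases f2; simp add: field_simps pi8_simps power2_eq_square)
qed

lemma sum_error_coeff_quad_form:
  fixes x0 x1 :: real
  defines "w \<equiv> vec2 (of_real x0) (of_real x1)"
  shows "(\<Sum>k<4. \<Sum>a\<in>UNIV. error_coeff k a w * quad_form M (signal_pair k a))
       = of_real ((11 + 8 * sqrt 2) / 28) * (quad_form M (sos_vec1 w) + quad_form M (sos_vec2 w))"
proof -
  let ?J = "{..<4::nat} \<times> (UNIV :: bool set)"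
  have "(\<Sum>k<4. \<Sum>a\<in>UNIV. error_coeff k a w * quad_form M (signal_pair k a))
      = (\<Sum>(k, a)\<in>?J. error_coeff k a w * quad_form M (signal_pair k a))"
    by (simp add: sum.cartesian_product)
  also have "\<dots> = (\<Sum>e\<in>UNIV. \<Sum>f\<in>UNIV. M e f *
      (\<Sum>(k, a)\<in>?J. error_coeff k a w * cnj (signal_pair k a e) * signal_pair k a f))"
    using sum_quad_form[of ?J "\<lambda>(k, a). error_coeff k a w" M "\<lambda>(k, a). signal_pair k a"]
    by (simp add: case_prod_unfold)
  also have "\<dots> = (\<Sum>e\<in>UNIV. \<Sum>f\<in>UNIV. M e f * (of_real ((11 + 8 * sqrt 2) / 28)
      * (cnj (sos_vec1 w e) * sos_vec1 w f + cnj (sos_vec2 w e) * sos_vec2 w f)))"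
    by (simp only: sos_certificate[of x0 x1, folded w_def] flip: sum.cartesian_product)
  also have "\<dots> = of_real ((11 + 8 * sqrt 2) / 28) * (quad_form M (sos_vec1 w) + quad_form M (sos_vec2 w))"
    using quad_form_pair_expand .
  finally show ?thesis .
qed

lemma error_weight_ge:
  assumes "positive_op M"
  shows "Re (error_weight M v) \<ge> ebit_min * Re (sift_weight M v)"
proof -
  let ?q = "\<lambda>w. quad_form M (sos_vec1 w) + quad_form M (sos_vec2 w)"
  have "error_weight M v - of_real ebit_min * sift_weight M v
      = (\<Sum>k<4. \<Sum>a\<in>UNIV. (error_coeff k a (re_ket v) + error_coeff k a (im_ket v))
                          * quad_form M (signal_pair k a))"
    by (simp add: error_weight_def sift_weight_def error_coeff_def filtered_mult_cnj sum_UNIV_bool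
        sum_distrib_left sum_subtractf[symmetric] algebra_simps)
  also have "\<dots> = of_real ((11 + 8 * sqrt 2) / 28) * (?q (re_ket v) + ?q (im_ket v))"
    by (simp add: distrib_right sum.distrib re_ket_vec2 im_ket_vec2 sum_error_coeff_quad_form
        distrib_left)
  finally have "Re (error_weight M v - of_real ebit_min * sift_weight M v)
      = Re (of_real ((11 + 8 * sqrt 2) / 28) * (?q (re_ket v) + ?q (im_ket v)))"
    by (rule arg_cong)
  then have gap: "Re (error_weight M v) - ebit_min * Re (sift_weight M v)
      = (11 + 8 * sqrt 2) / 28 * Re (?q (re_ket v) + ?q (im_ket v))"
    by simp
  have "Re (?q (re_ket v) + ?q (im_ket v)) \<ge> 0"
    using Re_quad_form_nonneg[OF assms] by (simp add: add_nonneg_nonneg)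
  then have "(11 + 8 * sqrt 2) / 28 * Re (?q (re_ket v) + ?q (im_ket v)) \<ge> 0"
    by simp
  then show ?thesis
    using gap by linarith
qed

lemma ebit_lower_bound:
  assumes "valid_attack J Mvac M sigma" and "Re (trace (rhoAB J M sigma)) > 0"
  shows "ebit (rhoAB J M sigma) \<ge> ebit_min"
  using assms by (intro ebit_rhoAB_ge error_weight_ge) (auto simp: valid_attack_def)

section \<open>The optimal attack\<close>

lemma chi_vec4:
  "chi 0 = vec4 (r2 / 2) (r2 / 4) (r2 / 4) 0"
  "chi 1 = vec4 0 (r2 / 4) (r2 / 4) (r2 / 2)"
  "chi 2 = vec4 0 (- r2 / 4) (- r2 / 4) (r2 / 2)"
  "chi 3 = vec4 (r2 / 2) (- r2 / 4) (- r2 / 4) 0"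
  unfolding chi_def lam_plus_def lam_minus_def
  \<comment> \<open>plain simp would turn \<open>phi (1 + 2)\<close> into \<open>phi (Suc (Suc (Suc 0)))\<close>, out of reach of
    \<open>phi_vec2\<close>\<close>
  by (simp_all only: add_0 one_plus_numeral numeral_plus_numeral add_num_simps phi_vec2 tket_vec2)
    (auto simp: vec4_def field_simps pi8_simps intro!: ext)

lemma antisym_pair_vec4:
  "(\<lambda>z. tket (phi 0) (phi 2) z - tket (phi 2) (phi 0) z) = vec4 0 1 (- 1) 0"
  "(\<lambda>z. tket (phi 3) (phi 1) z - tket (phi 1) (phi 3) z) = vec4 0 (- 1) 1 0"
  unfolding phi_vec2 tket_vec2
  by (auto simp: vec4_def field_simps pi8_simps intro!: ext)

lemma Mvac_opt_phi31:
  "Mvac_opt = (\<lambda>x y. outer (\<lambda>z. tket (phi 3) (phi 1) z - tket (phi 1) (phi 3) z)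
                            (\<lambda>z. tket (phi 3) (phi 1) z - tket (phi 1) (phi 3) z) x y / 2)"
  unfolding Mvac_opt_def antisym_pair_vec4
  by (auto simp: outer_def vec4_def intro!: ext)


lemma Mvac_opt_annihilates_pairs: "app Mvac_opt (tket (phi m) (phi m)) = (\<lambda>_. 0)"
proof -
  have "inner (vec4 0 1 (- 1) 0) (tket (phi m) (phi m)) = 0"
    by (simp add: inner_def sum_UNIV_bool_bool tket_def)
  then show ?thesis
    unfolding Mvac_opt_def antisym_pair_vec4 by (simp add: app_outer_divide)
qed

lemma Mvac_opt_sum_Mopt: "Mvac_opt x y + (\<Sum>i<4. Mopt i x y) = idop x y"
proof -
  obtain x1 x2 y1 y2 where xy: "x = (x1, x2)" "y = (y1, y2)"
    by fastforce
  show ?thesis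
    unfolding sum_lessThan_4 Mopt_def Mvac_opt_def antisym_pair_vec4 chi_vec4 xy
    by (cases x1; cases x2; cases y1; cases y2) (simp_all add: outer_def idop_def field_simps pi8_simps)
qed

lemma inner_phi_phi: "inner (phi m) (phi m) = 1"
proof -
  have "inner (phi m) (phi m) = inner (phi (m mod 4)) (phi (m mod 4))"
    by (simp add: phi_def)
  moreover have "m mod 4 \<in> {0, 1, 2, 3}"
    by auto
  moreover have "c8 * c8 + s8 * s8 = 1"
    by (simp add: pi8_simps field_simps)
  ultimately show ?thesis
    by (auto simp: phi_vec2 inner_def sum_UNIV_bool add.commute simp del: One_nat_def)
qed

lemma valid_attack_opt: "valid_attack 4 Mvac_opt Mopt phi"
proof -
  have "positive_op Mvac_opt"
    unfolding Mvac_opt_def using positive_op_divide[OF positive_op_outer, of 2] by simp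
  then show ?thesis
    using Mvac_opt_sum_Mopt inner_phi_phi by (simp add: valid_attack_def Mopt_def positive_op_outer)
qed

lemma weights_Mopt_phi:
  assumes "m \<in> {0, 1, 2, 3}"
  shows "error_weight (Mopt m) (phi m) = (2 - r2) / 4"
    and "sift_weight (Mopt m) (phi m) = (4 - r2) / 4"
  using assms
  unfolding error_weight_def sift_weight_def sum_lessThan_4 sum_UNIV_bool Mopt_def quad_form_outer
    signal_pair_def
  by (auto simp only: insert_iff empty_iff signal_vec2 filtered_mat2 tket_vec2 chi_vec4 phi_vec2
      if_True if_False not_True_eq_False not_False_eq_True app_mat2_vec2 vec2_apply)
    (simp_all add: inner_vec4 field_simps pi8_simps)

theorem theorem5:
  shows "(\<forall>J Mvac M sigma. valid_attack J Mvac M sigma \<longrightarrow>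
              Re (trace (rhoAB J M sigma)) > 0 \<longrightarrow> ebit (rhoAB J M sigma) \<ge> (3 - sqrt 2) / 7)
       \<and> valid_attack 4 Mvac_opt Mopt phi
       \<and> Re (trace (rhoAB 4 Mopt phi)) > 0
       \<and> ebit (rhoAB 4 Mopt phi) = (3 - sqrt 2) / 7
       \<and> Mvac_opt = (\<lambda>x y. outer (\<lambda>z. tket (phi 3) (phi 1) z - tket (phi 1) (phi 3) z)
                                 (\<lambda>z. tket (phi 3) (phi 1) z - tket (phi 1) (phi 3) z) x y / 2)
       \<and> (\<forall>m. app Mvac_opt (tket (phi m) (phi m)) = (\<lambda>_. 0))"
proof -
  have error: "rhoAB 4 Mopt phi (False, True) (False, True) + rhoAB 4 Mopt phi (True, False) (True, False)
      = 2 - r2"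
    by (simp add: rhoAB_error_entries sum_lessThan_4 weights_Mopt_phi field_simps)
  have trace: "trace (rhoAB 4 Mopt phi) = 4 - r2"
    by (simp add: trace_rhoAB sum_lessThan_4 weights_Mopt_phi field_simps)
  have "sqrt 2 < 4"
    using sqrt2_less_2 by linarith
  then have trace_pos: "Re (trace (rhoAB 4 Mopt phi)) > 0"
    by (simp add: trace)
  have "ebit (rhoAB 4 Mopt phi) = (2 - sqrt 2) / (4 - sqrt 2)"
    by (simp add: ebit_def error trace)
  also have "\<dots> = (3 - sqrt 2) / 7"
    using \<open>sqrt 2 < 4\<close> by (simp add: field_simps algebra_simps)
  finally show ?thesis
    using ebit_lower_bound valid_attack_opt trace_pos Mvac_opt_phi31 Mvac_opt_annihilates_pairs
    by blast
qed

end
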